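(* Let $q$ be a power of the prime $p$ and $n$ a positive integer. Let $h\in\mathbb{F}_q[x]$ with $\gcd\left(h(x),\frac{x^n-1}{x-1}\right)=1$, and let $m$ be a positive integer with $m<q-1$ and $\gcd(m,q-1)=1$. Then: (i) if $m=1$, then for every $\alpha,\theta_0,\ldots,\theta_{q-1}\in\mathbb{F}_{q^n}$ with $\mathrm{Tr}_{q^n/q}(\alpha)\neq -h(1)$, the polynomial $$P(x)=L_h(x)+\alpha\cdot\mathrm{Tr}_{q^n/q}(x)+\sum_{i=0}^{q-1}(\theta_i^q-\theta_i)\cdot\mathrm{Tr}_{q^n/q}(x)^i$$ is a permutation polynomial of $\mathbb{F}_{q^n}$; in particular, if $p\nmid n$, one may take $\alpha$ to be any element of $\mathbb{F}_q\setminus\{-\frac{h(1)}{n}\}$; (ii) if $m>1$, then for every $\alpha,\beta,\theta_0,\ldots,\theta_{q-1}\in\mathbb{F}_{q^n}$ with $\mathrm{Tr}_{q^n/q}(\alpha)=-h(1)$ and $\mathrm{Tr}_{q^n/q}(\beta)\neq 0$, the polynomial $$P(x)=L_h(x)+\alpha\cdot\mathrm{Tr}_{q^n/q}(x)+\beta\cdot\mathrm{Tr}_{q^n/q}(x)^m+\sum_{i=0}^{q-1}(\theta_i^q-\theta_i)\cdot\mathrm{Tr}_{q^n/q}(x)^i$$ is a permutation polynomial of $\mathbb{F}_{q^n}$; in particular, if $p\nmid n$, one may take $\alpha=-\frac{h(1)}{n}$ and $\beta$ any nonzero element of $\mathbb{F}_q$.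
   Context: For $u(x)=\sum_{i=0}^m a_i x^i\in\mathbb{F}_q[x]$, its linearized $q$-associate is $L_u(x)=\sum_{i=0}^m a_i x^{q^i}$. $\mathrm{Tr}_{q^n/q}(x)=x+x^q+\cdots+x^{q^{n-1}}$. A permutation polynomial of a finite field is a polynomial inducing a bijection of it. *)

theory Defs
  imports "HOL-Computational_Algebra.Computational_Algebra" "HOL-Library.Cardinality"
begin

definition trace :: "nat \<Rightarrow> nat \<Rightarrow> 'a::field \<Rightarrow> 'a" where
  "trace q n x = (\<Sum>i<n. x ^ (q ^ i))"

definition lin_assoc :: "nat \<Rightarrow> 'a::field poly \<Rightarrow> 'a \<Rightarrow> 'a" where
  "lin_assoc q u x = (\<Sum>i\<le>degree u. coeff u i * x ^ (q ^ i))"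

definition subfield_q :: "nat \<Rightarrow> 'a::field set" where
  "subfield_q q = {a. a ^ q = a}"

end

theory Submission
  imports Defs
begin

text \<open>
  Write \<open>P(x) = L\<^sub>h(x) + g(Tr x)\<close>. As \<open>h\<close> has coefficients in \<open>\<bbbF>\<^sub>q\<close>,
  \<open>Tr \<circ> L\<^sub>h = h(1) \<cdot> Tr\<close>; moreover \<open>Tr(\<gamma> \<cdot> Tr(x)\<^sup>i) = Tr(\<gamma>) \<cdot> Tr(x)\<^sup>i\<close> and the
  coefficients \<open>\<theta>\<^sup>q - \<theta>\<close> have trace zero. Hence \<open>Tr(P(x)) = \<psi>(Tr x)\<close> with
  \<open>\<psi>(t) = (h(1) + Tr \<alpha>) t + Tr(\<beta>) t\<^sup>m\<close>, and \<open>\<psi>\<close> is injective on \<open>\<bbbF>\<^sub>q\<close> under either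
  hypothesis (for \<open>m > 1\<close> because \<open>t \<mapsto> t\<^sup>m\<close> permutes \<open>\<bbbF>\<^sub>q\<close> when \<open>gcd(m, q - 1) = 1\<close>).
  So \<open>P(x) = P(y)\<close> forces \<open>Tr x = Tr y\<close> and then \<open>L\<^sub>h(x - y) = 0\<close>. The linearized
  associate of \<open>\<Phi> = 1 + x + \<dots> + x\<^sup>n\<^sup>-\<^sup>1\<close> is \<open>Tr\<close>, \<open>L\<^sub>u\<^sub>h = L\<^sub>u \<circ> L\<^sub>h\<close>, and a Bezout identity
  \<open>u h + v \<Phi> = 1\<close> gives \<open>x - y = L\<^sub>u(L\<^sub>h(x - y)) + L\<^sub>v(Tr(x - y)) = 0\<close>.
\<close>

text \<open>
  The library's Bezout lemmas live in \<open>euclidean_ring_gcd\<close>, which \<open>'a poly\<close> instantiates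
  only when \<open>'a\<close> is itself a \<open>factorial_ring_gcd\<close>; an arbitrary field is not.
\<close>

lemma (in euclidean_ring) coprime_imp_bezout:
  assumes "coprime a b"
  shows "\<exists>u v. u * a + v * b = 1"
  using assms
proof (induction "euclidean_size b" arbitrary: a b rule: less_induct)
  case less
  show ?case
  proof (cases "b = 0")
    case True
    with less.prems have "1 div a * a + 0 * b = 1" by simp
    then show ?thesis by blast
  next
    case False
    with less.prems have "coprime b (a mod b)" by (simp add: ac_simps)
    moreover have "euclidean_size (a mod b) < euclidean_size b"
      using False by (rule mod_size_less)
    ultimately obtain u v where "u * b + v * (a mod b) = 1"
      using less.hyps by blast
    then have "v * a + (u - v * (a div b)) * b = 1"
      by (simp add: minus_div_mult_eq_mod [symmetric] algebra_simps)
    then show ?thesis by blast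
  qed
qed

lemma inj_on_power_fixed_points:
  fixes q m :: nat
  assumes "q > 0" and "m > 0" and "coprime m (q - 1)"
  shows "inj_on (\<lambda>t::'a::monoid_mult. t ^ m) {t. t ^ q = t}"
proof (rule inj_onI)
  have fixed: "x ^ ((q - 1) * w + 1) = x" if "x ^ q = x" for x :: 'a and w
  proof (induction w)
    case (Suc w)
    have "(q - 1) * Suc w + 1 = ((q - 1) * w + 1) + (q - 1)"
      by simp
    then have "x ^ ((q - 1) * Suc w + 1) = x ^ ((q - 1) * w + 1) * x ^ (q - 1)"
      by (simp only: power_add [of x "(q - 1) * w + 1" "q - 1", symmetric])
    also have "\<dots> = x * x ^ (q - 1)"
      by (simp only: Suc.IH)
    also have "\<dots> = x ^ q"
      using \<open>q > 0\<close> by (simp flip: power_Suc)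
    finally show ?case
      using that by simp
  qed simp
  obtain u v where "m * u = (q - 1) * v + gcd m (q - 1)"
    using bezout_nat [of m "q - 1"] \<open>m > 0\<close> by blast
  with assms(3) have uv: "m * u = (q - 1) * v + 1"
    by simp
  fix s t :: 'a
  assume "s \<in> {t. t ^ q = t}" "t \<in> {t. t ^ q = t}" and "s ^ m = t ^ m"
  then have "s ^ q = s" "t ^ q = t"
    by simp_all
  have "s = s ^ (m * u)"
    using fixed [OF \<open>s ^ q = s\<close>, of v] by (simp only: uv)
  also have "\<dots> = t ^ (m * u)"
    by (simp only: power_mult \<open>s ^ m = t ^ m\<close>)
  also have "\<dots> = t"
    using fixed [OF \<open>t ^ q = t\<close>, of v] by (simp only: uv)
  finally show "s = t" .
qed

text \<open>
  The library has this as \<open>finite_field_power_card_eq_same\<close> for the class \<open>finite_field\<close>,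
  which a type of sort \<open>{finite, field}\<close> is not known to belong to.
\<close>

lemma finite_field_power_card: "(x::'a::{finite,field}) ^ CARD('a) = x"
proof (cases "x = 0")
  case False
  define U where "U = UNIV - {0::'a}"
  have "finite U" and card_U: "card U = CARD('a) - 1"
    by (simp_all add: U_def card_Diff_singleton)
  have "bij_betw ((*) x) U U"
    by (rule bij_betwI [where g = "\<lambda>y. y / x"]) (use False in \<open>auto simp: U_def\<close>)
  then have "(\<Prod>y\<in>U. x * y) = \<Prod>U"
    by (rule prod.reindex_bij_betw)
  then have "x ^ card U * \<Prod>U = 1 * \<Prod>U"
    by (simp add: prod.distrib)
  moreover have "\<Prod>U \<noteq> 0"
    using \<open>finite U\<close> by (simp add: U_def)
  ultimately have "x ^ card U = 1"
    by (simp only: mult_cancel_right) simp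
  moreover have "CARD('a) = Suc (card U)"
    using card_U finite_UNIV_card_ge_0 [where 'a = 'a] by simp
  ultimately show ?thesis
    by simp
qed (simp add: finite_UNIV_card_ge_0)

lemma CHAR_dvd_card: "CHAR('a::{finite,field}) dvd CARD('a)"
proof -
  have "(\<Sum>x\<in>UNIV. x + 1) = (\<Sum>x\<in>UNIV. x :: 'a)"
    by (rule sum.reindex_bij_betw) (rule bij_betwI [where g = "\<lambda>y. y - 1"]; simp)
  then have "of_nat CARD('a) = (0::'a)"
    by (simp add: sum.distrib)
  then show ?thesis
    by (simp add: of_nat_eq_0_iff_char_dvd)
qed

lemma CHAR_finite_field:
  assumes "prime p" and "CARD('a::{finite,field}) = p ^ e"
  shows "CHAR('a) = p"
proof -
  have prime_CHAR: "prime CHAR('a)"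
    by (intro prime_CHAR_semidom finite_imp_CHAR_pos) simp
  moreover have "CHAR('a) dvd p ^ e"
    using CHAR_dvd_card [where 'a = 'a] assms(2) by simp
  ultimately have "CHAR('a) dvd p"
    by (rule prime_dvd_power)
  with prime_CHAR assms(1) show ?thesis
    by (simp add: primes_dvd_imp_eq)
qed

lemma lin_assoc_eq_sum_atMost:
  assumes "degree u \<le> N"
  shows "lin_assoc q u x = (\<Sum>i\<le>N. coeff u i * x ^ (q ^ i))"
  unfolding lin_assoc_def
  by (rule sum.mono_neutral_left) (use assms in \<open>auto simp: coeff_eq_0\<close>)

lemma lin_assoc_0 [simp]: "lin_assoc q 0 x = 0"
  by (simp add: lin_assoc_def)

lemma lin_assoc_1 [simp]: "lin_assoc q 1 x = x"
  by (simp add: lin_assoc_def)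

lemma lin_assoc_add: "lin_assoc q (u + v) x = lin_assoc q u x + lin_assoc q v x"
proof -
  define N where "N = max (degree u) (degree v)"
  have "degree (u + v) \<le> N" "degree u \<le> N" "degree v \<le> N"
    using degree_add_le_max [of u v] by (auto simp: N_def)
  then show ?thesis
    by (simp add: lin_assoc_eq_sum_atMost [of _ N] sum.distrib distrib_right)
qed

lemma lin_assoc_sum: "lin_assoc q (\<Sum>j\<in>A. f j) x = (\<Sum>j\<in>A. lin_assoc q (f j) x)"
  by (induction A rule: infinite_finite_induct) (simp_all add: lin_assoc_add)

lemma lin_assoc_smult: "lin_assoc q (smult c u) x = c * lin_assoc q u x"
  using lin_assoc_eq_sum_atMost [of "smult c u" "degree u" q x]
  by (simp add: lin_assoc_def sum_distrib_left mult.assoc)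

lemma lin_assoc_pCons: "lin_assoc q (pCons c u) x = c * x + lin_assoc q u (x ^ q)"
proof -
  have "lin_assoc q (pCons c u) x = (\<Sum>i\<le>Suc (degree u). coeff (pCons c u) i * x ^ (q ^ i))"
    by (rule lin_assoc_eq_sum_atMost) (rule degree_pCons_le)
  also have "\<dots> = c * x + (\<Sum>i\<le>degree u. coeff u i * x ^ (q ^ Suc i))"
    by (simp only: sum.atMost_Suc_shift) simp
  also have "(\<Sum>i\<le>degree u. coeff u i * x ^ (q ^ Suc i)) = lin_assoc q u (x ^ q)"
    by (simp add: lin_assoc_def power_mult [symmetric] mult.commute)
  finally show ?thesis .
qed

lemma lin_assoc_monom_1: "lin_assoc q (monom 1 i) x = x ^ (q ^ i)"
proof -
  have "lin_assoc q (monom 1 i) x = (\<Sum>j\<in>insert i {..<i}. coeff (monom 1 i) j * x ^ (q ^ j))"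
    by (simp add: lin_assoc_def degree_monom_eq lessThan_Suc_atMost [symmetric])
  also have "\<dots> = x ^ (q ^ i)"
    by (simp add: coeff_monom)
  finally show ?thesis .
qed

lemma lin_assoc_sum_monom_eq_trace: "lin_assoc q (\<Sum>i<n. monom 1 i) x = trace q n x"
  by (simp add: lin_assoc_sum lin_assoc_monom_1 trace_def)

lemma monom_minus_1_div_eq_sum:
  "(monom 1 n - 1) div [:-1, 1:] = (\<Sum>i<n. monom (1::'a::field) i)"
proof -
  have "[:-1, 1:] = monom (1::'a) 1 - 1"
    by (simp add: monom_Suc one_pCons)
  then have "[:-1, 1:] * (\<Sum>i<n. monom (1::'a) i) = (\<Sum>i<n. monom 1 (Suc i) - monom 1 i)"
    by (simp add: sum_distrib_left left_diff_distrib mult_monom)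
  also have "\<dots> = monom 1 n - 1"
    by (simp add: sum_lessThan_telescope monom_0 one_pCons)
  finally show ?thesis
    by (metis nonzero_mult_div_cancel_left pCons_eq_0_iff zero_neq_one)
qed

lemma power_in_subfield_q: "c \<in> subfield_q q \<Longrightarrow> c ^ i \<in> subfield_q q"
  by (simp add: subfield_q_def flip: power_mult) (metis mult.commute power_mult)

lemma subfield_q_power_q_power: "c \<in> subfield_q q \<Longrightarrow> c ^ (q ^ i) = c"
  by (induction i) (simp_all add: subfield_q_def power_mult flip: power_Suc2)

context
  fixes q k :: nat
  assumes q_eq: "q = CHAR('a::{finite,field}) ^ k"
begin

lemma q_gt_0: "q > 0"
  by (simp add: q_eq finite_imp_CHAR_pos)

lemma frobenius_sum: "(\<Sum>j\<in>A. f j :: 'a) ^ (q ^ i) = (\<Sum>j\<in>A. f j ^ (q ^ i))"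
  by (rule freshmans_dream_sum')
    (simp_all add: prime_CHAR_semidom finite_imp_CHAR_pos q_eq flip: power_mult)

lemma frobenius_add: "((x::'a) + y) ^ (q ^ i) = x ^ (q ^ i) + y ^ (q ^ i)"
  by (rule freshmans_dream')
    (simp_all add: prime_CHAR_semidom finite_imp_CHAR_pos q_eq flip: power_mult)

lemma frobenius_diff: "((x::'a) - y) ^ (q ^ i) = x ^ (q ^ i) - y ^ (q ^ i)"
  using frobenius_add [of "x - y" y i] by (simp add: eq_diff_eq)

lemma of_nat_in_subfield_q: "(of_nat j :: 'a) \<in> subfield_q q"
proof (induction j)
  case (Suc j)
  have "(1 + of_nat j :: 'a) ^ (q ^ 1) = 1 ^ (q ^ 1) + of_nat j ^ (q ^ 1)"
    by (rule frobenius_add)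
  with Suc.IH show ?case
    by (simp add: subfield_q_def)
qed (simp add: subfield_q_def q_gt_0)

lemma uminus_in_subfield_q: "(x::'a) \<in> subfield_q q \<Longrightarrow> - x \<in> subfield_q q"
  using frobenius_diff [of 0 x 1] q_gt_0 by (simp add: subfield_q_def)

lemma divide_in_subfield_q:
  "(x::'a) \<in> subfield_q q \<Longrightarrow> y \<in> subfield_q q \<Longrightarrow> x / y \<in> subfield_q q"
  by (simp add: subfield_q_def power_divide)

lemma poly_1_in_subfield_q:
  assumes "\<forall>i. coeff h i \<in> subfield_q q"
  shows "poly h (1::'a) \<in> subfield_q q"
  using frobenius_sum [of "coeff h" "{..degree h}" 1] assms
  by (simp add: subfield_q_def poly_altdef)

lemma lin_assoc_at_0 [simp]: "lin_assoc q u (0::'a) = 0"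
  using q_gt_0 by (simp add: lin_assoc_def power_0_left)

lemma lin_assoc_diff_right: "lin_assoc q u ((x::'a) - y) = lin_assoc q u x - lin_assoc q u y"
  by (simp add: lin_assoc_def frobenius_diff sum_subtractf right_diff_distrib)

lemma lin_assoc_power_q:
  assumes "\<forall>i. coeff u i \<in> subfield_q q"
  shows "lin_assoc q u ((x::'a) ^ q) = lin_assoc q u x ^ q"
  using frobenius_sum [of "\<lambda>i. coeff u i * x ^ (q ^ i)" "{..degree u}" 1] assms
  by (simp add: lin_assoc_def subfield_q_def power_mult_distrib power_mult [symmetric] mult.commute)

lemma lin_assoc_mult:
  assumes "\<forall>i. coeff h i \<in> subfield_q q"
  shows "lin_assoc q (u * h) (x::'a) = lin_assoc q u (lin_assoc q h x)"
proof (induction u arbitrary: x)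
  case (pCons c u)
  have "lin_assoc q (pCons c u * h) x = c * lin_assoc q h x + lin_assoc q (u * h) (x ^ q)"
    by (simp add: lin_assoc_add lin_assoc_smult lin_assoc_pCons)
  also have "\<dots> = c * lin_assoc q h x + lin_assoc q u (lin_assoc q h x ^ q)"
    by (simp add: pCons.IH lin_assoc_power_q [OF assms])
  finally show ?case
    by (simp add: lin_assoc_pCons)
qed simp

end

context
  fixes q k n :: nat
  assumes q_eq: "q = CHAR('a::{finite,field}) ^ k"
    and card_eq: "CARD('a) = q ^ n"
begin

lemma power_q_power_n: "(x::'a) ^ (q ^ n) = x"
  using finite_field_power_card [of x] by (simp add: card_eq)

lemma trace_sum: "trace q n (\<Sum>j\<in>A. f j :: 'a) = (\<Sum>j\<in>A. trace q n (f j))"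
  by (simp add: trace_def frobenius_sum [OF q_eq] sum.swap [of _ A])

lemma trace_add: "trace q n ((x::'a) + y) = trace q n x + trace q n y"
  by (simp add: trace_def frobenius_add [OF q_eq] sum.distrib)

lemma trace_diff: "trace q n ((x::'a) - y) = trace q n x - trace q n y"
  by (simp add: trace_def frobenius_diff [OF q_eq] sum_subtractf)

lemma trace_power_q: "trace q n ((x::'a) ^ q) = trace q n x"
proof -
  define f where "f i = x ^ (q ^ i)" for i
  have "trace q n (x ^ q) = (\<Sum>i<n. f (Suc i))"
    by (simp add: trace_def f_def power_mult [symmetric] mult.commute)
  also have "\<dots> = (\<Sum>i<Suc n. f i) - f 0"
    by (simp only: sum.lessThan_Suc_shift) simp
  also have "\<dots> = trace q n x"
    by (simp add: trace_def f_def power_q_power_n)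
  finally show ?thesis .
qed

lemma trace_power_q_power: "trace q n ((x::'a) ^ (q ^ i)) = trace q n x"
proof (induction i)
  case (Suc i)
  have "x ^ (q ^ Suc i) = (x ^ (q ^ i)) ^ q"
    by (simp add: power_mult [symmetric] mult.commute)
  with Suc.IH show ?case
    by (simp add: trace_power_q)
qed simp

lemma trace_in_subfield_q: "trace q n (x::'a) \<in> subfield_q q"
proof -
  have "trace q n x ^ q = trace q n (x ^ q)"
    using frobenius_sum [OF q_eq, of "\<lambda>i. x ^ (q ^ i)" "{..<n}" 1]
    by (simp add: trace_def power_mult [symmetric] mult.commute)
  then show ?thesis
    by (simp add: subfield_q_def trace_power_q)
qed

lemma trace_mult_subfield_q:
  "(c::'a) \<in> subfield_q q \<Longrightarrow> trace q n (c * x) = c * trace q n x"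
  by (simp add: trace_def power_mult_distrib subfield_q_power_q_power sum_distrib_left)

lemma trace_subfield_q: "(c::'a) \<in> subfield_q q \<Longrightarrow> trace q n c = of_nat n * c"
  by (simp add: trace_def subfield_q_power_q_power)

lemma trace_mult_power_trace:
  "trace q n (\<gamma> * trace q n (x::'a) ^ i) = trace q n \<gamma> * trace q n x ^ i"
  using trace_mult_subfield_q [OF power_in_subfield_q [OF trace_in_subfield_q]]
  by (simp add: mult.commute)

lemma trace_mult_trace: "trace q n (\<gamma> * trace q n (x::'a)) = trace q n \<gamma> * trace q n x"
  using trace_mult_power_trace [of \<gamma> x 1] by simp

lemma trace_artin_schreier_sum:
  "trace q n (\<Sum>i\<in>I. (\<theta> i ^ q - \<theta> i) * trace q n (x::'a) ^ i) = 0"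
  by (simp add: trace_sum trace_mult_power_trace trace_diff trace_power_q)

lemma trace_lin_assoc:
  assumes "\<forall>i. coeff h i \<in> subfield_q q"
  shows "trace q n (lin_assoc q h (x::'a)) = poly h 1 * trace q n x"
  using assms
  by (simp add: lin_assoc_def trace_sum trace_mult_subfield_q trace_power_q_power
      poly_altdef sum_distrib_right)

lemma lin_assoc_trace_kernel:
  assumes h_Fq: "\<forall>i. coeff h i \<in> subfield_q q"
    and h_gcd: "coprime h ((monom 1 n - 1) div [:-1, 1:])"
    and "lin_assoc q h z = 0" and "trace q n (z::'a) = 0"
  shows "z = 0"
proof -
  define \<Phi> where "\<Phi> = (\<Sum>i<n. monom (1::'a) i)"
  have \<Phi>_Fq: "\<forall>i. coeff \<Phi> i \<in> subfield_q q"
    using q_gt_0 [OF q_eq] by (simp add: \<Phi>_def coeff_sum coeff_monom subfield_q_def)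
  have "coprime h \<Phi>"
    using h_gcd by (simp add: \<Phi>_def monom_minus_1_div_eq_sum)
  then obtain u v where "u * h + v * \<Phi> = 1"
    using coprime_imp_bezout by blast
  then have "z = lin_assoc q (u * h + v * \<Phi>) z"
    by simp
  also have "\<dots> = lin_assoc q u (lin_assoc q h z) + lin_assoc q v (lin_assoc q \<Phi> z)"
    by (simp add: lin_assoc_add lin_assoc_mult [OF q_eq h_Fq] lin_assoc_mult [OF q_eq \<Phi>_Fq])
  also have "\<dots> = 0"
    using assms(3,4) by (simp add: \<Phi>_def lin_assoc_sum_monom_eq_trace lin_assoc_at_0 [OF q_eq])
  finally show ?thesis .
qed

lemma bij_lin_assoc_plus_trace:
  assumes h_Fq: "\<forall>i. coeff h i \<in> subfield_q q"
    and h_gcd: "coprime h ((monom 1 n - 1) div [:-1, 1:])"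
    and trace_eq: "\<And>x. trace q n (lin_assoc q h x + g (trace q n x)) = \<psi> (trace q n x)"
    and inj: "inj_on \<psi> (subfield_q q)"
  shows "bij (\<lambda>x::'a. lin_assoc q h x + g (trace q n x))"
proof -
  have "inj (\<lambda>x::'a. lin_assoc q h x + g (trace q n x))"
  proof (rule injI)
    fix x y :: 'a
    assume eq: "lin_assoc q h x + g (trace q n x) = lin_assoc q h y + g (trace q n y)"
    then have "\<psi> (trace q n x) = \<psi> (trace q n y)"
      by (metis trace_eq)
    then have "trace q n x = trace q n y"
      using inj trace_in_subfield_q by (blast dest: inj_onD)
    with eq have "lin_assoc q h (x - y) = 0" and "trace q n (x - y) = 0"
      by (simp_all add: lin_assoc_diff_right [OF q_eq] trace_diff)
    then have "x - y = 0"
      by (rule lin_assoc_trace_kernel [OF h_Fq h_gcd])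
    then show "x = y"
      by simp
  qed
  then show ?thesis
    by (simp add: bij_def finite_UNIV_inj_surj)
qed

lemma bij_linear_perturbation:
  assumes h_Fq: "\<forall>i. coeff h i \<in> subfield_q q"
    and h_gcd: "coprime h ((monom 1 n - 1) div [:-1, 1:])"
    and "trace q n \<alpha> \<noteq> - poly h 1"
  shows "bij (\<lambda>x::'a. lin_assoc q h x + \<alpha> * trace q n x
              + (\<Sum>i\<in>I. (\<theta> i ^ q - \<theta> i) * trace q n x ^ i))"
proof -
  let ?c = "poly h 1 + trace q n \<alpha>"
  have "bij (\<lambda>x. lin_assoc q h x
          + (\<lambda>t. \<alpha> * t + (\<Sum>i\<in>I. (\<theta> i ^ q - \<theta> i) * t ^ i)) (trace q n x))"
  proof (rule bij_lin_assoc_plus_trace [OF h_Fq h_gcd, where \<psi> = "\<lambda>t. ?c * t"])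
    show "trace q n (lin_assoc q h x + (\<alpha> * trace q n x
            + (\<Sum>i\<in>I. (\<theta> i ^ q - \<theta> i) * trace q n x ^ i))) = ?c * trace q n x" for x
      by (simp only: trace_add trace_lin_assoc [OF h_Fq] trace_mult_trace trace_artin_schreier_sum)
        (simp add: distrib_right)
    have "?c \<noteq> 0"
      using assms(3) by (simp add: add_eq_0_iff)
    then show "inj_on (\<lambda>t. ?c * t) (subfield_q q)"
      by (simp add: inj_on_def)
  qed
  then show ?thesis
    by (simp add: add.assoc)
qed

lemma bij_power_perturbation:
  assumes h_Fq: "\<forall>i. coeff h i \<in> subfield_q q"
    and h_gcd: "coprime h ((monom 1 n - 1) div [:-1, 1:])"
    and "m > 0" and "coprime m (q - 1)"
    and "trace q n \<alpha> = - poly h 1" and "trace q n \<beta> \<noteq> 0"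
  shows "bij (\<lambda>x::'a. lin_assoc q h x + \<alpha> * trace q n x + \<beta> * trace q n x ^ m
              + (\<Sum>i\<in>I. (\<theta> i ^ q - \<theta> i) * trace q n x ^ i))"
proof -
  have "bij (\<lambda>x. lin_assoc q h x
          + (\<lambda>t. \<alpha> * t + \<beta> * t ^ m + (\<Sum>i\<in>I. (\<theta> i ^ q - \<theta> i) * t ^ i)) (trace q n x))"
  proof (rule bij_lin_assoc_plus_trace [OF h_Fq h_gcd, where \<psi> = "\<lambda>t. trace q n \<beta> * t ^ m"])
    show "trace q n (lin_assoc q h x + (\<alpha> * trace q n x + \<beta> * trace q n x ^ m
            + (\<Sum>i\<in>I. (\<theta> i ^ q - \<theta> i) * trace q n x ^ i))) = trace q n \<beta> * trace q n x ^ m"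
      for x
      using assms(5)
      by (simp only: trace_add trace_lin_assoc [OF h_Fq] trace_mult_trace trace_mult_power_trace
          trace_artin_schreier_sum) simp
    have "inj_on (\<lambda>t. t ^ m) (subfield_q q)"
      using inj_on_power_fixed_points [OF q_gt_0 [OF q_eq] assms(3,4)]
      by (simp add: subfield_q_def)
    then show "inj_on (\<lambda>t. trace q n \<beta> * t ^ m) (subfield_q q)"
      using assms(6) by (simp add: inj_on_def)
  qed
  then show ?thesis
    by (simp add: add.assoc)
qed

end

theorem corollary3p8:
  fixes p q n k m :: nat and h :: "'a::{finite,field} poly"
  assumes "prime p" and "k \<ge> 1" and "q = p ^ k"
    and "n \<ge> 1" and "CARD('a) = q ^ n"
    and h_Fq: "\<forall>i. coeff h i \<in> subfield_q q"
    and h_gcd: "coprime h ((monom 1 n - 1) div [:-1, 1:])"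
    and "m \<ge> 1" and "m < q - 1" and "coprime m (q - 1)"
  shows
    "(m = 1 \<longrightarrow>
       (\<forall>(\<alpha>::'a) (\<theta>::nat \<Rightarrow> 'a). trace q n \<alpha> \<noteq> - poly h 1 \<longrightarrow>
          bij (\<lambda>x. lin_assoc q h x + \<alpha> * trace q n x
                 + (\<Sum>i=0..q-1. (\<theta> i ^ q - \<theta> i) * trace q n x ^ i)))
       \<and> (\<not> p dvd n \<longrightarrow>
          (\<forall>(\<alpha>::'a) (\<theta>::nat \<Rightarrow> 'a). \<alpha> \<in> subfield_q q \<and> \<alpha> \<noteq> - poly h 1 / of_nat n \<longrightarrow>
            bij (\<lambda>x. lin_assoc q h x + \<alpha> * trace q n x
                 + (\<Sum>i=0..q-1. (\<theta> i ^ q - \<theta> i) * trace q n x ^ i)))))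
   \<and> (m > 1 \<longrightarrow>
       (\<forall>(\<alpha>::'a) (\<beta>::'a) (\<theta>::nat \<Rightarrow> 'a).
          trace q n \<alpha> = - poly h 1 \<and> trace q n \<beta> \<noteq> 0 \<longrightarrow>
          bij (\<lambda>x. lin_assoc q h x + \<alpha> * trace q n x + \<beta> * trace q n x ^ m
                 + (\<Sum>i=0..q-1. (\<theta> i ^ q - \<theta> i) * trace q n x ^ i)))
       \<and> (\<not> p dvd n \<longrightarrow>
          (\<forall>(\<beta>::'a) (\<theta>::nat \<Rightarrow> 'a). \<beta> \<in> subfield_q q \<and> \<beta> \<noteq> 0 \<longrightarrow>
            bij (\<lambda>x. lin_assoc q h x + (- poly h 1 / of_nat n) * trace q n x
                 + \<beta> * trace q n x ^ m
                 + (\<Sum>i=0..q-1. (\<theta> i ^ q - \<theta> i) * trace q n x ^ i)))))"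
proof -
  have "CHAR('a) = p"
    using CHAR_finite_field [OF \<open>prime p\<close>, of "k * n"] assms(3,5) by (simp add: power_mult)
  then have q: "q = CHAR('a) ^ k"
    using assms(3) by simp
  note card = \<open>CARD('a) = q ^ n\<close>
  have n_nonzero: "of_nat n \<noteq> (0::'a)" if "\<not> p dvd n"
    using that \<open>CHAR('a) = p\<close> by (simp add: of_nat_eq_0_iff_char_dvd)
  have "- poly h 1 / of_nat n \<in> subfield_q q"
    by (intro divide_in_subfield_q [OF q] uminus_in_subfield_q [OF q]
        poly_1_in_subfield_q [OF q h_Fq] of_nat_in_subfield_q [OF q])
  then have trace_\<alpha>\<^sub>0: "trace q n (- poly h 1 / of_nat n) = - poly h 1" if "\<not> p dvd n"
    using n_nonzero [OF that] by (simp add: trace_subfield_q [OF q card])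
  note linear = bij_linear_perturbation [OF q card h_Fq h_gcd]
    and power = bij_power_perturbation [OF q card h_Fq h_gcd _ \<open>coprime m (q - 1)\<close>]
  show ?thesis
  proof (intro conjI impI allI; (elim conjE)?; rule linear power)
  qed (use \<open>m \<ge> 1\<close> n_nonzero trace_\<alpha>\<^sub>0 in \<open>auto simp: trace_subfield_q [OF q card] field_simps\<close>)
qed

end
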